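(* Let $\mathcal G$ be a groupoid and $\mathcal C$ a finitely aligned left-cancellative small category such that $(\mathcal G,\mathcal C)$ is a matched pair. Then the Zappa–Szép product $\mathcal C\bowtie\mathcal G$ is left-cancellative and finitely aligned.
   Context: Categories are small, identified with morphism sets; $r,s$ range/source. Left-cancellative: $ab=ac\Rightarrow b=c$; finitely aligned: for all $a,b$ there is finite $F$ with $a\mathcal C\cap b\mathcal C=\bigcup_{c\in F}c\mathcal C$, where $c\mathcal C=\{cc'\}$. A matched pair $(\mathcal G,\mathcal C)$ with $\mathcal G^0=\mathcal C^0$ consists of a left action $g\triangleright c\in\mathcal C$ of $\mathcal G$ on $\mathcal C$ and a right action $g\triangleleft c\in\mathcal G$ of $\mathcal C$ on $\mathcal G$ (defined when $s(g)=r(c)$; satisfying $r(c)\triangleright c=c$, $g\triangleright s(g)=r(g)$, $r(g\triangleright c)=r(g)$, $(gh)\triangleright c=g\triangleright(h\triangleright c)$ and the symmetric right-action axioms) such that $s(g\triangleright c)=r(g\triangleleft c)$, $g\triangleright(c_1c_2)=(g\triangleright c_1)((g\triangleleft c_1)\triangleright c_2)$ and $(g_1g_2)\triangleleft c=(g_1\triangleleft(g_2\triangleright c))(g_2\triangleleft c)$. The Zappa–Szép product $\mathcal C\bowtie\mathcal G$ has morphisms $cg$ ($s(c)=r(g)$), $r(cg)=r(c)$, $s(cg)=s(g)$, and product $c_1g_1c_2g_2=c_1(g_1\triangleright c_2)(g_1\triangleleft c_2)g_2$; each element factors uniquely as $cg$. *)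

theory Defs
  imports Main
begin

text \<open>A small category is given by its set of morphisms A, range r, source s and
  a composition m; m a b is the composite ab, defined when s a = r b.
  Objects are identified with identity morphisms (those u with r u = u).\<close>

definition category :: "'a set \<Rightarrow> ('a \<Rightarrow> 'a) \<Rightarrow> ('a \<Rightarrow> 'a) \<Rightarrow> ('a \<Rightarrow> 'a \<Rightarrow> 'a) \<Rightarrow> bool" where
  "category A r s m \<longleftrightarrow>
     (\<forall>a\<in>A. r a \<in> A \<and> s a \<in> A \<and> r (r a) = r a \<and> s (r a) = r a
              \<and> r (s a) = s a \<and> s (s a) = s a
              \<and> m (r a) a = a \<and> m a (s a) = a) \<and>
     (\<forall>a\<in>A. \<forall>b\<in>A. s a = r b \<longrightarrow> m a b \<in> A \<and> r (m a b) = r a \<and> s (m a b) = s b) \<and>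
     (\<forall>a\<in>A. \<forall>b\<in>A. \<forall>c\<in>A. s a = r b \<longrightarrow> s b = r c \<longrightarrow> m (m a b) c = m a (m b c))"

definition objects :: "'a set \<Rightarrow> ('a \<Rightarrow> 'a) \<Rightarrow> 'a set" where
  "objects A r = {u \<in> A. r u = u}"

definition groupoid :: "'a set \<Rightarrow> ('a \<Rightarrow> 'a) \<Rightarrow> ('a \<Rightarrow> 'a) \<Rightarrow> ('a \<Rightarrow> 'a \<Rightarrow> 'a) \<Rightarrow> bool" where
  "groupoid A r s m \<longleftrightarrow> category A r s m \<and>
     (\<forall>g\<in>A. \<exists>h\<in>A. s g = r h \<and> s h = r g \<and> m g h = r g \<and> m h g = s g)"

definition left_cancellative :: "'a set \<Rightarrow> ('a \<Rightarrow> 'a) \<Rightarrow> ('a \<Rightarrow> 'a) \<Rightarrow> ('a \<Rightarrow> 'a \<Rightarrow> 'a) \<Rightarrow> bool" where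
  "left_cancellative A r s m \<longleftrightarrow>
     (\<forall>a\<in>A. \<forall>b\<in>A. \<forall>c\<in>A. s a = r b \<longrightarrow> s a = r c \<longrightarrow> m a b = m a c \<longrightarrow> b = c)"

definition right_ideal :: "'a set \<Rightarrow> ('a \<Rightarrow> 'a) \<Rightarrow> ('a \<Rightarrow> 'a) \<Rightarrow> ('a \<Rightarrow> 'a \<Rightarrow> 'a) \<Rightarrow> 'a \<Rightarrow> 'a set" where
  "right_ideal A r s m a = {m a c' | c'. c' \<in> A \<and> s a = r c'}"

definition finitely_aligned :: "'a set \<Rightarrow> ('a \<Rightarrow> 'a) \<Rightarrow> ('a \<Rightarrow> 'a) \<Rightarrow> ('a \<Rightarrow> 'a \<Rightarrow> 'a) \<Rightarrow> bool" where
  "finitely_aligned A r s m \<longleftrightarrow>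
     (\<forall>a\<in>A. \<forall>b\<in>A. \<exists>F. finite F \<and> F \<subseteq> A \<and>
        right_ideal A r s m a \<inter> right_ideal A r s m b = (\<Union>c\<in>F. right_ideal A r s m c))"

text \<open>Matched pair (G, C): lact g c = g \<triangleright> c, ract g c = g \<triangleleft> c, defined when sG g = rC c.\<close>
definition matched_pair ::
  "'a set \<Rightarrow> ('a \<Rightarrow> 'a) \<Rightarrow> ('a \<Rightarrow> 'a) \<Rightarrow> ('a \<Rightarrow> 'a \<Rightarrow> 'a) \<Rightarrow>
   'a set \<Rightarrow> ('a \<Rightarrow> 'a) \<Rightarrow> ('a \<Rightarrow> 'a) \<Rightarrow> ('a \<Rightarrow> 'a \<Rightarrow> 'a) \<Rightarrow>
   ('a \<Rightarrow> 'a \<Rightarrow> 'a) \<Rightarrow> ('a \<Rightarrow> 'a \<Rightarrow> 'a) \<Rightarrow> bool" where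
  "matched_pair G rG sG mG C rC sC mC lact ract \<longleftrightarrow>
     objects G rG = objects C rC \<and>
     \<comment> \<open>closure\<close>
     (\<forall>g\<in>G. \<forall>c\<in>C. sG g = rC c \<longrightarrow> lact g c \<in> C \<and> ract g c \<in> G) \<and>
     \<comment> \<open>left action of G on C\<close>
     (\<forall>c\<in>C. lact (rC c) c = c) \<and>
     (\<forall>g\<in>G. lact g (sG g) = rG g) \<and>
     (\<forall>g\<in>G. \<forall>c\<in>C. sG g = rC c \<longrightarrow> rC (lact g c) = rG g) \<and>
     (\<forall>g\<in>G. \<forall>h\<in>G. \<forall>c\<in>C. sG g = rG h \<longrightarrow> sG h = rC c \<longrightarrow>
         lact (mG g h) c = lact g (lact h c)) \<and>
     \<comment> \<open>right action of C on G\<close>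
     (\<forall>g\<in>G. ract g (sG g) = g) \<and>
     (\<forall>c\<in>C. ract (rC c) c = sC c) \<and>
     (\<forall>g\<in>G. \<forall>c\<in>C. sG g = rC c \<longrightarrow> sG (ract g c) = sC c) \<and>
     (\<forall>g\<in>G. \<forall>c1\<in>C. \<forall>c2\<in>C. sG g = rC c1 \<longrightarrow> sC c1 = rC c2 \<longrightarrow>
         ract g (mC c1 c2) = ract (ract g c1) c2) \<and>
     \<comment> \<open>compatibility\<close>
     (\<forall>g\<in>G. \<forall>c\<in>C. sG g = rC c \<longrightarrow> sC (lact g c) = rG (ract g c)) \<and>
     (\<forall>g\<in>G. \<forall>c1\<in>C. \<forall>c2\<in>C. sG g = rC c1 \<longrightarrow> sC c1 = rC c2 \<longrightarrow>
         lact g (mC c1 c2) = mC (lact g c1) (lact (ract g c1) c2)) \<and>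
     (\<forall>g1\<in>G. \<forall>g2\<in>G. \<forall>c\<in>C. sG g1 = rG g2 \<longrightarrow> sG g2 = rC c \<longrightarrow>
         ract (mG g1 g2) c = mG (ract g1 (lact g2 c)) (ract g2 c))"

text \<open>Zappa--Szep product C \<bowtie> G: morphisms are pairs (c, g) with sC c = rG g
  (written cg); objects are the pairs (u, u).\<close>
definition zs_mor :: "'a set \<Rightarrow> ('a \<Rightarrow> 'a) \<Rightarrow> 'a set \<Rightarrow> ('a \<Rightarrow> 'a) \<Rightarrow> ('a \<times> 'a) set" where
  "zs_mor C sC G rG = {(c, g). c \<in> C \<and> g \<in> G \<and> sC c = rG g}"

definition zs_r :: "('a \<Rightarrow> 'a) \<Rightarrow> 'a \<times> 'a \<Rightarrow> 'a \<times> 'a" where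
  "zs_r rC x = (rC (fst x), rC (fst x))"

definition zs_s :: "('a \<Rightarrow> 'a) \<Rightarrow> 'a \<times> 'a \<Rightarrow> 'a \<times> 'a" where
  "zs_s sG x = (sG (snd x), sG (snd x))"

definition zs_mult :: "('a \<Rightarrow> 'a \<Rightarrow> 'a) \<Rightarrow> ('a \<Rightarrow> 'a \<Rightarrow> 'a) \<Rightarrow> ('a \<Rightarrow> 'a \<Rightarrow> 'a) \<Rightarrow> ('a \<Rightarrow> 'a \<Rightarrow> 'a)
     \<Rightarrow> 'a \<times> 'a \<Rightarrow> 'a \<times> 'a \<Rightarrow> 'a \<times> 'a" where
  "zs_mult mC mG lact ract x y =
     (mC (fst x) (lact (snd x) (fst y)), mG (ract (snd x) (fst y)) (snd y))"

end

theory Submission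
  imports Defs
begin

text \<open>Since every g in G is invertible, the map c \<mapsto> g \<triangleright> c is a bijection from the
  morphisms of C with range s g onto those with range r g, and every morphism of G
  can be left-divided by any other with the same range. Consequently the right ideal
  of cg in C \<bowtie> G consists of all composable pairs (e, l) with e in cC, independently
  of g. Left cancellation in C \<bowtie> G reduces to left cancellation in C, injectivity
  of g \<triangleright> and left cancellation in G; finite alignment is inherited from C via the
  morphisms c s(c).\<close>

lemma right_idealI: "c \<in> A \<Longrightarrow> s a = r c \<Longrightarrow> m a c \<in> right_ideal A r s m a"
  unfolding right_ideal_def by blast

locale small_groupoid =
  fixes G rG sG mG
  assumes groupoid: "groupoid G rG sG mG"
begin

lemma category: "category G rG sG mG"
  using groupoid unfolding groupoid_def by blast

lemma range_props: "g \<in> G \<Longrightarrow> rG g \<in> G \<and> rG (rG g) = rG g \<and> sG (rG g) = rG g \<and> mG (rG g) g = g"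
  using category unfolding category_def by (elim conjE) blast

lemma comp_props:
  "g \<in> G \<Longrightarrow> h \<in> G \<Longrightarrow> sG g = rG h \<Longrightarrow> mG g h \<in> G \<and> rG (mG g h) = rG g \<and> sG (mG g h) = sG h"
  using category unfolding category_def by (elim conjE) blast

lemma assoc:
  "a \<in> G \<Longrightarrow> b \<in> G \<Longrightarrow> c \<in> G \<Longrightarrow> sG a = rG b \<Longrightarrow> sG b = rG c \<Longrightarrow> mG (mG a b) c = mG a (mG b c)"
  using category unfolding category_def by (elim conjE) blast

lemma inverse:
  assumes "g \<in> G"
  obtains h where "h \<in> G" "sG g = rG h" "sG h = rG g" "mG g h = rG g" "mG h g = sG g"
  using groupoid assms unfolding groupoid_def by blast

lemma left_inverse_comp:
  assumes "h \<in> G" "g \<in> G" "a \<in> G" "sG h = rG g" "mG h g = sG g" "sG g = rG a"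
  shows "mG h (mG g a) = a"
proof -
  have "mG h (mG g a) = mG (mG h g) a" using assoc[of h g a] assms(1-4,6) by simp
  also have "\<dots> = a" using assms range_props[of a] by metis
  finally show ?thesis .
qed

lemma left_cancellative: "left_cancellative G rG sG mG"
  unfolding left_cancellative_def
proof (intro ballI impI)
  fix k a b assume "k \<in> G" "a \<in> G" "b \<in> G" "sG k = rG a" "sG k = rG b" "mG k a = mG k b"
  moreover obtain h where "h \<in> G" "sG h = rG k" "mG h k = sG k" using inverse \<open>k \<in> G\<close> by metis
  ultimately show "a = b" using left_inverse_comp[of h k a] left_inverse_comp[of h k b] by metis
qed

lemma left_divide:
  assumes "k \<in> G" "l \<in> G" "rG k = rG l"
  obtains q where "q \<in> G" "sG k = rG q" "mG k q = l"
proof -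
  obtain h where h: "h \<in> G" "sG k = rG h" "sG h = rG k" "mG k h = rG k"
    using inverse assms(1) by metis
  have "mG k (mG h l) = l"
    using left_inverse_comp[of k h l] h assms by simp
  then show thesis using that[of "mG h l"] comp_props[of h l] h assms by simp
qed

end

locale matched_groupoid_category = small_groupoid G rG sG mG
  for G rG sG mG +
  fixes C rC sC mC lact ract
  assumes category_C: "category C rC sC mC"
    and matched: "matched_pair G rG sG mG C rC sC mC lact ract"
begin

lemma C_source: "c \<in> C \<Longrightarrow> sC c \<in> C \<and> rC (sC c) = sC c"
  using category_C unfolding category_def by (elim conjE) blast

lemma C_comp: "a \<in> C \<Longrightarrow> b \<in> C \<Longrightarrow> sC a = rC b \<Longrightarrow> mC a b \<in> C \<and> rC (mC a b) = rC a \<and> sC (mC a b) = sC b"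
  using category_C unfolding category_def by (elim conjE) blast

lemma source_in_G:
  assumes "c \<in> C"
  shows "sC c \<in> G \<and> rG (sC c) = sC c"
proof -
  have "objects G rG = objects C rC" using matched unfolding matched_pair_def by (rule conjunct1)
  moreover have "sC c \<in> objects C rC" using C_source assms unfolding objects_def by simp
  ultimately show ?thesis unfolding objects_def by blast
qed

lemma action_closed: "g \<in> G \<Longrightarrow> c \<in> C \<Longrightarrow> sG g = rC c \<Longrightarrow> lact g c \<in> C \<and> ract g c \<in> G"
  using matched unfolding matched_pair_def by (elim conjE) blast

lemma lact_range: "c \<in> C \<Longrightarrow> lact (rC c) c = c"
  using matched unfolding matched_pair_def by (elim conjE) blast

lemma range_lact: "g \<in> G \<Longrightarrow> c \<in> C \<Longrightarrow> sG g = rC c \<Longrightarrow> rC (lact g c) = rG g"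
  using matched unfolding matched_pair_def by (elim conjE) blast

lemma lact_comp: "g \<in> G \<Longrightarrow> h \<in> G \<Longrightarrow> c \<in> C \<Longrightarrow> sG g = rG h \<Longrightarrow> sG h = rC c \<Longrightarrow>
    lact (mG g h) c = lact g (lact h c)"
  using matched unfolding matched_pair_def by (elim conjE) blast

lemma source_ract: "g \<in> G \<Longrightarrow> c \<in> C \<Longrightarrow> sG g = rC c \<Longrightarrow> sG (ract g c) = sC c"
  using matched unfolding matched_pair_def by (elim conjE) blast

lemma source_lact: "g \<in> G \<Longrightarrow> c \<in> C \<Longrightarrow> sG g = rC c \<Longrightarrow> sC (lact g c) = rG (ract g c)"
  using matched unfolding matched_pair_def by (elim conjE) blast

lemma lact_inverse:
  assumes "h \<in> G" "g \<in> G" "c \<in> C" "sG h = rG g" "mG h g = sG g" "sG g = rC c"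
  shows "lact h (lact g c) = c"
  using lact_comp[of h g c] lact_range[of c] assms by metis

lemma lact_inj:
  assumes "g \<in> G" "c \<in> C" "d \<in> C" "sG g = rC c" "sG g = rC d" "lact g c = lact g d"
  shows "c = d"
proof -
  obtain h where "h \<in> G" "sG h = rG g" "mG h g = sG g" using inverse assms(1) by metis
  then show ?thesis using lact_inverse[of h g c] lact_inverse[of h g d] assms by metis
qed

lemma lact_surj:
  assumes "g \<in> G" "d \<in> C" "rC d = rG g"
  obtains c where "c \<in> C" "rC c = sG g" "lact g c = d"
proof -
  obtain h where h: "h \<in> G" "sG g = rG h" "sG h = rG g" "mG g h = rG g" "mG h g = sG g"
    using inverse assms(1) by metis
  have "lact g (lact h d) = d"
    using lact_inverse[of g h d] h assms by simp
  then show thesis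
    using that[of "lact h d"] action_closed[of h d] range_lact[of h d] h assms by simp
qed

abbreviation "Z \<equiv> zs_mor C sC G rG"
abbreviation "zs_ideal \<equiv> right_ideal Z (zs_r rC) (zs_s sG) (zs_mult mC mG lact ract)"

lemma zs_left_cancellative:
  assumes lc: "left_cancellative C rC sC mC"
  shows "left_cancellative Z (zs_r rC) (zs_s sG) (zs_mult mC mG lact ract)"
  unfolding left_cancellative_def
proof (intro ballI impI)
  fix x y z assume "x \<in> Z" "y \<in> Z" "z \<in> Z"
    and "zs_s sG x = zs_r rC y" "zs_s sG x = zs_r rC z"
    and eq: "zs_mult mC mG lact ract x y = zs_mult mC mG lact ract x z"
  then obtain a g c k d l where x: "x = (a, g)" "a \<in> C" "g \<in> G" "sC a = rG g"
    and y: "y = (c, k)" "c \<in> C" "k \<in> G" "sC c = rG k" "sG g = rC c"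
    and z: "z = (d, l)" "d \<in> C" "l \<in> G" "sC d = rG l" "sG g = rC d"
    unfolding zs_mor_def zs_s_def zs_r_def by auto
  have eqC: "mC a (lact g c) = mC a (lact g d)" and eqG: "mG (ract g c) k = mG (ract g d) l"
    using eq x y z unfolding zs_mult_def by auto
  have "lact g c = lact g d"
    using lc eqC action_closed range_lact x y z unfolding left_cancellative_def by metis
  then have "c = d" using lact_inj x y z by blast
  moreover have "k = l"
    using left_cancellative eqG \<open>c = d\<close> action_closed[of g c] source_ract[of g c] x y z
    unfolding left_cancellative_def by metis
  ultimately show "y = z" using y z by simp
qed

lemma zs_ideal_eq:
  assumes "(a, g) \<in> Z"
  shows "zs_ideal (a, g) = {(e, l). e \<in> right_ideal C rC sC mC a \<and> l \<in> G \<and> sC e = rG l}"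
proof (rule set_eqI, rule iffI)
  have x: "a \<in> C" "g \<in> G" "sC a = rG g" using assms unfolding zs_mor_def by auto
  {
    fix p assume "p \<in> zs_ideal (a, g)"
    then obtain c k where ck: "c \<in> C" "k \<in> G" "sC c = rG k" "sG g = rC c"
      and p: "p = (mC a (lact g c), mG (ract g c) k)"
      unfolding right_ideal_def zs_mor_def zs_s_def zs_r_def zs_mult_def by auto
    have act: "lact g c \<in> C" "ract g c \<in> G" "rC (lact g c) = sC a"
      using action_closed range_lact x ck by auto
    have "sC (mC a (lact g c)) = rG (mG (ract g c) k)"
      using C_comp[of a "lact g c"] comp_props[of "ract g c" k] source_lact source_ract act x ck
      by simp
    moreover have "mG (ract g c) k \<in> G"
      using comp_props[of "ract g c" k] source_ract act x ck by simp
    ultimately show "p \<in> {(e, l). e \<in> right_ideal C rC sC mC a \<and> l \<in> G \<and> sC e = rG l}"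
      using p act unfolding right_ideal_def by auto
  next
    fix p assume "p \<in> {(e, l). e \<in> right_ideal C rC sC mC a \<and> l \<in> G \<and> sC e = rG l}"
    then obtain d l where p: "p = (mC a d, l)" and d: "d \<in> C" "sC a = rC d"
      and l: "l \<in> G" "sC d = rG l"
      unfolding right_ideal_def using C_comp x by auto
    obtain c where c: "c \<in> C" "rC c = sG g" "lact g c = d"
      using lact_surj[of g d] x d by metis
    have ract: "ract g c \<in> G" "rG (ract g c) = rG l"
      using action_closed[of g c] source_lact[of g c] c x l by auto
    obtain k where k: "k \<in> G" "sG (ract g c) = rG k" "mG (ract g c) k = l"
      using left_divide ract l by metis
    have "(c, k) \<in> Z" using c k source_ract[of g c] x unfolding zs_mor_def by auto
    moreover have "zs_s sG (a, g) = zs_r rC (c, k)" using c unfolding zs_s_def zs_r_def by simp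
    moreover have "p = zs_mult mC mG lact ract (a, g) (c, k)"
      using p c k unfolding zs_mult_def by simp
    ultimately show "p \<in> zs_ideal (a, g)" using right_idealI by metis
  }
qed

lemma zs_finitely_aligned:
  assumes fa: "finitely_aligned C rC sC mC"
  shows "finitely_aligned Z (zs_r rC) (zs_s sG) (zs_mult mC mG lact ract)"
  unfolding finitely_aligned_def
proof (intro ballI)
  define lift where "lift I = {(e, l). e \<in> I \<and> l \<in> G \<and> sC e = rG l}" for I
  fix x y assume "x \<in> Z" "y \<in> Z"
  then obtain a g b h where x: "x = (a, g)" "(a, g) \<in> Z" "a \<in> C"
    and y: "y = (b, h)" "(b, h) \<in> Z" "b \<in> C"
    unfolding zs_mor_def by auto
  obtain F where F: "finite F" "F \<subseteq> C"
    "right_ideal C rC sC mC a \<inter> right_ideal C rC sC mC b = (\<Union>c\<in>F. right_ideal C rC sC mC c)"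
    using fa x y unfolding finitely_aligned_def by meson
  have FZ: "(\<lambda>c. (c, sC c)) ` F \<subseteq> Z"
    using F source_in_G unfolding zs_mor_def by auto
  have lifted: "zs_ideal (c, sC c) = lift (right_ideal C rC sC mC c)" if "c \<in> F" for c
    using zs_ideal_eq FZ that unfolding lift_def by blast
  have "zs_ideal x \<inter> zs_ideal y = lift (right_ideal C rC sC mC a) \<inter> lift (right_ideal C rC sC mC b)"
    using zs_ideal_eq x y unfolding lift_def by simp
  also have "\<dots> = lift (\<Union>c\<in>F. right_ideal C rC sC mC c)"
    using F(3) unfolding lift_def by blast
  also have "\<dots> = (\<Union>c\<in>F. zs_ideal (c, sC c))"
    using lifted unfolding lift_def by auto
  finally show "\<exists>F'. finite F' \<and> F' \<subseteq> Z \<and> zs_ideal x \<inter> zs_ideal y = (\<Union>z\<in>F'. zs_ideal z)"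
    using F(1) FZ by (intro exI[of _ "(\<lambda>c. (c, sC c)) ` F"]) auto
qed

end

theorem lemma3p5:
  assumes "groupoid G rG sG mG"
    and "category C rC sC mC"
    and "left_cancellative C rC sC mC"
    and "finitely_aligned C rC sC mC"
    and "matched_pair G rG sG mG C rC sC mC lact ract"
  shows "left_cancellative (zs_mor C sC G rG) (zs_r rC) (zs_s sG) (zs_mult mC mG lact ract)
       \<and> finitely_aligned (zs_mor C sC G rG) (zs_r rC) (zs_s sG) (zs_mult mC mG lact ract)"
proof -
  interpret matched_groupoid_category G rG sG mG C rC sC mC lact ract
    using assms(1,2,5) by unfold_locales
  show ?thesis using zs_left_cancellative[OF assms(3)] zs_finitely_aligned[OF assms(4)] by blast
qed

end
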